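(* Let $\lambda$ be a nonzero real number, $x$ real, and $n\ge0$ an integer. Then $$\beta_{n,\lambda}(x)=\sum_{j=0}^{n}\frac{\lambda^{j}(1)_{j+1,\frac{1}{\lambda}}}{j+1}\sum_{k=j}^{n}\binom{n}{k}S_{2,\lambda}(k,j)\,(x)_{n-k,\lambda}.$$
   Context: For real $y$, $\mu\neq 0$ and integer $k\ge0$: $(y)_{0,\mu}=1$, $(y)_{k,\mu}=y(y-\mu)\cdots(y-(k-1)\mu)$ (used with $\mu=\lambda$ and $\mu=1/\lambda$); $(y)_0=1$, $(y)_k=y(y-1)\cdots(y-k+1)$. The degenerate exponential is $e_\lambda^x(t)=\sum_{k\ge0}(x)_{k,\lambda}t^k/k!=(1+\lambda t)^{x/\lambda}$, $e_\lambda(t)=e^1_\lambda(t)$. The degenerate Bernoulli polynomials are defined by $\frac{t}{e_\lambda(t)-1}e_\lambda^x(t)=\sum_{n\ge0}\beta_{n,\lambda}(x)\frac{t^n}{n!}$. The degenerate Stirling numbers of the second kind are defined by $(x)_{n,\lambda}=\sum_{k=0}^{n}S_{2,\lambda}(n,k)(x)_{k}$ ($n\ge0$). *)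

theory Defs
  imports "HOL-Computational_Algebra.Formal_Power_Series"
begin

definition gfact :: "real \<Rightarrow> nat \<Rightarrow> real \<Rightarrow> real" where
  "gfact y k mu = (\<Prod>i<k. y - real i * mu)"

definition ffact_r :: "real \<Rightarrow> nat \<Rightarrow> real" where
  "ffact_r y k = (\<Prod>i<k. y - real i)"

definition dexp :: "real \<Rightarrow> real \<Rightarrow> real fps" where
  "dexp lam x = Abs_fps (\<lambda>k. gfact x k lam / fact k)"

definition dbernoulli :: "real \<Rightarrow> nat \<Rightarrow> real \<Rightarrow> real" where
  "dbernoulli lam n x = fact n * fps_nth ((fps_X / (dexp lam 1 - 1)) * dexp lam x) n"

definition dstirling2 :: "real \<Rightarrow> nat \<Rightarrow> nat \<Rightarrow> real" where
  "dstirling2 lam n k =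
     (THE c. (\<forall>j>n. c j = 0) \<and> (\<forall>x. gfact x n lam = (\<Sum>j\<le>n. c j * ffact_r x j))) k"

end

theory Submission
  imports Defs
begin

(* Write u = e_lam(t) - 1. Both e_lam^x(t) and (1 + u)^x solve (1 + lam t) f' = x f with f(0) = 1,
   so e_lam^x(t) = (1 + u)^x. Expanding the right side in falling factorials of x identifies
   S_{2,lam}(k, j) = k!/j! [t^k] u^j. Taking x = lam gives (1 + u)^lam = 1 + lam t, hence
   t / u = sum_j (lam choose j+1)/lam u^j, and (lam choose j+1)/lam = lam^j (1)_{j+1,1/lam} / (j+1)!.
   Multiplying t / u by e_lam^x(t) and extracting the coefficient of t^n gives the formula. *)

unbundle fps_syntax

lemma gfact_0 [simp]: "gfact y 0 mu = 1"
  by (simp add: gfact_def)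

lemma gfact_Suc: "gfact y (Suc k) mu = gfact y k mu * (y - real k * mu)"
  by (simp add: gfact_def)

lemma dexp_nth [simp]: "dexp lam y $ k = gfact y k lam / fact k"
  by (simp add: dexp_def)

lemma fps_1_plus_const_X_mult_nth:
  fixes f :: "'a::comm_ring_1 fps"
  shows "((1 + fps_const a * fps_X) * f) $ k = f $ k + (if k = 0 then 0 else a * f $ (k - 1))"
proof -
  have "(1 + fps_const a * fps_X) * f = f + fps_const a * (fps_X * f)"
    by (simp add: distrib_right mult.assoc)
  then show ?thesis by simp
qed

lemma fps_1_plus_const_X_mult_deriv_nth:
  fixes f :: "real fps"
  shows "((1 + fps_const lam * fps_X) * fps_deriv f) $ k = real (Suc k) * f $ Suc k + lam * real k * f $ k"
  by (cases k) (simp_all add: fps_1_plus_const_X_mult_nth)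

lemma dexp_deriv: "(1 + fps_const lam * fps_X) * fps_deriv (dexp lam y) = fps_const y * dexp lam y"
proof (rule fps_ext)
  fix k
  have "((1 + fps_const lam * fps_X) * fps_deriv (dexp lam y)) $ k
      = real (Suc k) * (gfact y (Suc k) lam / fact (Suc k)) + lam * real k * (gfact y k lam / fact k)"
    by (simp only: fps_1_plus_const_X_mult_deriv_nth dexp_nth)
  also have "\<dots> = (fps_const y * dexp lam y) $ k"
    by (simp add: gfact_Suc field_simps del: of_nat_Suc)
  finally show "((1 + fps_const lam * fps_X) * fps_deriv (dexp lam y)) $ k = (fps_const y * dexp lam y) $ k" .
qed

lemma dexp_unique:
  assumes ode: "(1 + fps_const lam * fps_X) * fps_deriv f = fps_const y * f" and "f $ 0 = 1"
  shows "f = dexp lam y"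
proof -
  have step: "f $ Suc k = (y - real k * lam) * f $ k / real (Suc k)" for k
  proof -
    have "real (Suc k) * f $ Suc k + lam * real k * f $ k = y * f $ k"
      using arg_cong[OF ode, of "\<lambda>g. g $ k"] by (simp add: fps_1_plus_const_X_mult_deriv_nth)
    then show ?thesis by (simp add: field_simps del: of_nat_Suc)
  qed
  have "f $ k = dexp lam y $ k" for k
  proof (induction k)
    case 0
    then show ?case using \<open>f $ 0 = 1\<close> by simp
  next
    case (Suc k)
    then have "f $ Suc k = (y - real k * lam) * (gfact y k lam / fact k) / real (Suc k)"
      by (simp add: step)
    then show ?case by (simp add: gfact_Suc field_simps del: of_nat_Suc)
  qed
  then show ?thesis by (simp add: fps_eq_iff)
qed

lemma dexp_nonzero: "dexp lam y \<noteq> 0"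
proof
  assume "dexp lam y = 0"
  then show False using dexp_nth[of lam y 0] by simp
qed

lemma fps_binomial_ode: "(1 + fps_X) * fps_deriv (fps_binomial c) = fps_const (c::'a::field_char_0) * fps_binomial c"
  by (simp add: fps_binomial_deriv fps_is_unit_iff)

lemma fps_binomial_compose_dexp: "fps_binomial y oo (dexp lam 1 - 1) = dexp lam y"
proof -
  define U where "U = dexp lam 1 - 1"
  define B where "B = fps_binomial y"
  define g where "g = B oo U"
  define L where "L = 1 + fps_const lam * fps_X"
  have U0: "U $ 0 = 0" by (simp add: U_def)
  have "((1 + fps_X) * fps_deriv B) oo U = (fps_const y * B) oo U"
    by (simp add: B_def fps_binomial_ode)
  then have B_ode: "dexp lam 1 * (fps_deriv B oo U) = fps_const y * g"
    using U0 by (simp add: fps_compose_mult_distrib fps_compose_add_distrib U_def g_def)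
  have U_ode: "L * fps_deriv U = dexp lam 1"
    using dexp_deriv[of lam 1] by (simp add: U_def L_def)
  have "dexp lam 1 * (L * fps_deriv g) = (dexp lam 1 * (fps_deriv B oo U)) * (L * fps_deriv U)"
    by (simp add: g_def fps_compose_deriv[OF U0] algebra_simps)
  also have "\<dots> = dexp lam 1 * (fps_const y * g)"
    by (simp add: B_ode U_ode algebra_simps)
  finally have "L * fps_deriv g = fps_const y * g"
    using dexp_nonzero[of lam 1] by simp
  moreover have "g $ 0 = 1" by (simp add: g_def B_def)
  ultimately show ?thesis
    unfolding L_def g_def B_def U_def by (rule dexp_unique)
qed

lemma ffact_r_eq_gbinomial: "ffact_r x k = (x gchoose k) * fact k"
  by (simp add: gbinomial_mult_fact' ffact_r_def atLeast0LessThan)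

lemma ffact_r_of_nat_self: "ffact_r (real m) m = fact m"
  by (simp add: ffact_r_eq_gbinomial flip: binomial_gbinomial)

lemma ffact_r_of_nat_eq_0: "m < k \<Longrightarrow> ffact_r (real m) k = 0"
  unfolding ffact_r_def by (rule prod_zero) auto

lemma sum_ffact_r_of_nat:
  assumes "m \<le> k"
  shows "(\<Sum>i\<le>k. a i * ffact_r (real m) i) = (\<Sum>i<m. a i * ffact_r (real m) i) + a m * fact m"
proof -
  have "(\<Sum>i\<le>k. a i * ffact_r (real m) i) = (\<Sum>i\<le>m. a i * ffact_r (real m) i)"
    using assms by (intro sum.mono_neutral_right) (auto simp: ffact_r_of_nat_eq_0)
  then show ?thesis by (simp add: lessThan_Suc_atMost [symmetric] ffact_r_of_nat_self)
qed

text \<open>Evaluating at \<open>x = 0, 1, 2, \<dots>\<close> recovers the coefficients one at a time.\<close>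
lemma ffact_r_expansion_unique:
  assumes "\<And>x. (\<Sum>i\<le>k. a i * ffact_r x i) = (\<Sum>i\<le>k. b i * ffact_r x i)" and "j \<le> k"
  shows "a j = b j"
  using \<open>j \<le> k\<close>
proof (induction j rule: less_induct)
  case (less m)
  then have "(\<Sum>i<m. a i * ffact_r (real m) i) = (\<Sum>i<m. b i * ffact_r (real m) i)"
    by (intro sum.cong) auto
  with assms(1)[of "real m"] show ?case
    by (simp add: sum_ffact_r_of_nat[OF \<open>m \<le> k\<close>])
qed

lemma gfact_eq_sum_ffact_r:
  "gfact x k lam = (\<Sum>j\<le>k. fact k / fact j * ((dexp lam 1 - 1) ^ j $ k) * ffact_r x j)"
proof -
  have "gfact x k lam / fact k = (\<Sum>j\<le>k. (x gchoose j) * ((dexp lam 1 - 1) ^ j $ k))"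
    using arg_cong[OF fps_binomial_compose_dexp[of x lam], of "\<lambda>f. f $ k"]
    by (simp add: fps_compose_nth atLeast0AtMost)
  then show ?thesis
    by (simp add: ffact_r_eq_gbinomial sum_distrib_left field_simps)
qed

lemma dstirling2_eq_dexp_power_nth:
  "dstirling2 lam k j = fact k / fact j * ((dexp lam 1 - 1) ^ j $ k)"
proof -
  define s where "s j = fact k / fact j * ((dexp lam 1 - 1) ^ j $ k)" for j
  let ?P = "\<lambda>c. (\<forall>j>k. c j = 0) \<and> (\<forall>x. gfact x k lam = (\<Sum>j\<le>k. c j * ffact_r x j))"
  have s_eq_0: "s j = 0" if "k < j" for j
    using startsby_zero_power_prefix[of "dexp lam 1 - 1" j] that by (simp add: s_def)
  have s_expansion: "gfact x k lam = (\<Sum>j\<le>k. s j * ffact_r x j)" for x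
    unfolding s_def by (rule gfact_eq_sum_ffact_r)
  have "(THE c. ?P c) = s"
  proof (rule the_equality)
    show "?P s" using s_eq_0 s_expansion by blast
  next
    fix c assume c: "?P c"
    show "c = s"
    proof
      fix j
      show "c j = s j"
      proof (cases "j \<le> k")
        case True
        show ?thesis
          by (rule ffact_r_expansion_unique[where k = k, OF _ True]) (use c s_expansion in metis)
      qed (use c s_eq_0 in auto)
    qed
  qed
  then show ?thesis by (simp add: dstirling2_def s_def)
qed

lemma dexp_self: "dexp lam lam = 1 + fps_const lam * fps_X"
proof (rule fps_ext)
  fix k
  show "dexp lam lam $ k = (1 + fps_const lam * fps_X) $ k"
  proof (cases "k \<ge> 2")
    case True
    have "gfact lam k lam = 0"
      unfolding gfact_def by (rule prod_zero) (use True in auto)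
    then show ?thesis using True by (simp add: fps_X_def)
  next
    case False
    then have "k = 0 \<or> k = 1" by auto
    then show ?thesis by (auto simp: gfact_def fps_X_def)
  qed
qed

lemma fps_X_divide_dexp:
  assumes "lam \<noteq> 0"
  shows "fps_X / (dexp lam 1 - 1) = Abs_fps (\<lambda>j. (lam gchoose (j + 1)) / lam) oo (dexp lam 1 - 1)"
proof -
  define U where "U = dexp lam 1 - 1"
  define C where "C = Abs_fps (\<lambda>j. (lam gchoose (j + 1)) / lam)"
  have U0: "U $ 0 = 0" by (simp add: U_def)
  have "fps_X * C = fps_const (1 / lam) * (fps_binomial lam - 1)"
    by (rule fps_ext) (simp add: C_def)
  then have "(fps_X * C) oo U = fps_X"
    using assms U0 by (simp add: fps_compose_mult_distrib fps_compose_sub_distrib U_def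
        fps_binomial_compose_dexp dexp_self)
  then have UC: "U * (C oo U) = fps_X"
    by (simp add: fps_compose_mult_distrib[OF U0] U0)
  moreover have "U \<noteq> 0" using UC by auto
  ultimately have "fps_X / U = C oo U" by (metis nonzero_mult_div_cancel_left)
  then show ?thesis by (simp add: U_def C_def)
qed

lemma gfact_inverse_eq_gbinomial:
  assumes "lam \<noteq> 0"
  shows "lam ^ m * gfact 1 m (1 / lam) = (lam gchoose m) * fact m"
proof -
  have "lam ^ m * gfact 1 m (1 / lam) = (\<Prod>i<m. lam * (1 - real i * (1 / lam)))"
    by (simp add: gfact_def prod.distrib)
  also have "\<dots> = (\<Prod>i<m. lam - real i)"
    using assms by (intro prod.cong) (simp_all add: field_simps)
  also have "\<dots> = (lam gchoose m) * fact m"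
    by (simp add: gbinomial_mult_fact' atLeast0LessThan)
  finally show ?thesis .
qed

lemma sum_atMost_triangle_swap:
  fixes f :: "nat \<Rightarrow> nat \<Rightarrow> 'a::comm_monoid_add"
  shows "(\<Sum>k\<le>n. \<Sum>j\<le>k. f j k) = (\<Sum>j\<le>n. \<Sum>k=j..n. f j k)"
  by (induction n) (simp_all add: sum.distrib)

lemma fps_compose_mult_nth:
  fixes f g h :: "'a::comm_semiring_1 fps"
  shows "((f oo g) * h) $ n = (\<Sum>j\<le>n. f $ j * (\<Sum>k=j..n. g ^ j $ k * h $ (n - k)))"
proof -
  have "((f oo g) * h) $ n = (\<Sum>k\<le>n. \<Sum>j\<le>k. f $ j * g ^ j $ k * h $ (n - k))"
    by (simp add: fps_mult_nth fps_compose_nth atLeast0AtMost sum_distrib_right)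
  also have "\<dots> = (\<Sum>j\<le>n. \<Sum>k=j..n. f $ j * g ^ j $ k * h $ (n - k))"
    by (rule sum_atMost_triangle_swap)
  finally show ?thesis by (simp add: sum_distrib_left mult.assoc)
qed

theorem theorem5:
  fixes lam x :: real and n :: nat
  assumes "lam \<noteq> 0"
  shows "dbernoulli lam n x =
    (\<Sum>j=0..n. (lam ^ j * gfact 1 (j + 1) (1 / lam)) / real (j + 1) *
       (\<Sum>k=j..n. real (n choose k) * dstirling2 lam k j * gfact x (n - k) lam))"
proof -
  define U where "U = dexp lam 1 - 1"
  define c where "c = (\<lambda>j. (lam gchoose (j + 1)) / lam)"
  have c_eq: "lam ^ j * gfact 1 (j + 1) (1 / lam) / real (j + 1) = fact j * c j" for j
    using gfact_inverse_eq_gbinomial[OF assms, of "j + 1"] assms by (simp add: c_def field_simps)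
  have "dbernoulli lam n x = fact n * ((Abs_fps c oo U) * dexp lam x) $ n"
    by (simp add: dbernoulli_def fps_X_divide_dexp[OF assms] U_def c_def)
  also have "\<dots> = (\<Sum>j\<le>n. c j * (\<Sum>k=j..n. fact n * U ^ j $ k * (gfact x (n - k) lam / fact (n - k))))"
    unfolding fps_compose_mult_nth by (simp add: sum_distrib_left mult_ac)
  also have "\<dots> = (\<Sum>j=0..n. fact j * c j *
       (\<Sum>k=j..n. real (n choose k) * dstirling2 lam k j * gfact x (n - k) lam))"
    unfolding atLeast0AtMost sum_distrib_left
    by (intro sum.cong refl)
      (auto simp: dstirling2_eq_dexp_power_nth binomial_fact U_def field_simps)
  finally show ?thesis by (simp only: c_eq)
qed

end
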